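(* Let $T:X\rightrightarrows X^*$ be a pseudomonotone operator. Then $T$ is $D$-maximal pseudomonotone if and only if $\widehat{T}=(\widehat{T})^\rho_D$, i.e. $\widehat T$ coincides with the restriction of $(\widehat T)^\rho$ to $\mathrm{dom}(\widehat T)=\mathrm{dom}(T)$.
   Context: $X$ is a real Banach space with dual $X^*$ and pairing $\langle x,x^*\rangle=x^*(x)$. A multivalued operator $T:X\rightrightarrows X^*$ is identified with its graph $T\subset X\times X^*$; $T(x)=\{x^*:(x,x^* )\in T\}$, $\mathrm{dom}(T)=\{x:T(x)\ne\emptyset\}$, $Z_T=\{x:0\in T(x)\}$. For $A\subset X^*$, $\operatorname{cone}(A)=\{tv:t\ge0,v\in A\}$ and $\operatorname{cone}_\circ(A)=\{tv:t>0,v\in A\}$. For $C\subset X$, $N_C(x)=\{x^*: \langle y-x,x^*\rangle\le0\ \forall y\in C\}$. For $(x,x^* ),(y,y^* )\in X\times X^*$, write $(x,x^* )\sim_p(y,y^* )$ if either $\min\{\langle x-y,y^*\rangle,\langle y-x,x^*\rangle\}<0$ or $\langle x-y,y^*\rangle=\langle y-x,x^*\rangle=0$. The pseudomonotone polar is $T^\rho=\{(x,x^* ): (x,x^* )\sim_p(y,y^* )\ \forall (y,y^* )\in T\}$, and $T^\rho_D$ denotes the restriction of $T^\rho$ to $\mathrm{dom}(T)$ (i.e. $T^\rho_D(x)=T^\rho(x)$ if $x\in\mathrm{dom}(T)$, $\emptyset$ otherwise). $T$ is pseudomonotone if for all $(x,x^* ),(y,y^* )\in T$, $\langle y-x,x^*\rangle\ge0$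 implies $\langle y-x,y^*\rangle\ge0$. Two operators $T,S$ are equivalent if $\mathrm{dom}(T)=\mathrm{dom}(S)$, $Z_T=Z_S$ and $\operatorname{cone}(T(x))=\operatorname{cone}(S(x))$ for all $x\in\mathrm{dom}(T)\setminus Z_T$. $T$ is $D$-maximal pseudomonotone if $T$ is pseudomonotone and there is a pseudomonotone operator $S$ equivalent to $T$ which has no proper pseudomonotone extension with the same domain. For pseudomonotone $T$ and $x\in Z_T$, let $L(T,x)=\{y\in X:\exists y^*\in T(y),\ \langle x-y,y^*\rangle\ge0\}$, and define $\widehat T(x)=N_{L(T,x)}(x)$ if $x\in Z_T$, $\widehat T(x)=\operatorname{cone}_\circ(T(x))$ if $x\in\mathrm{dom}(T)\setminus Z_T$, and $\widehat T(x)=\emptyset$ if $x\notin\mathrm{dom}(T)$. (It is known, due to Hadjisavvas, that $\widehat T$ is pseudomonotone, equivalent to $T$, and is the largest pseudomonotone operator equivalent to $T$.) *)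

theory Defs
  imports "HOL-Analysis.Analysis"
begin

text \<open>X is a real Banach space ('a::banach), its dual is the space of bounded (blinfun)
linear functionals; the pairing is blinfun_apply.
A multivalued operator is identified with its graph.\<close>

type_synonym 'a mop = "('a \<times> ('a \<Rightarrow>\<^sub>L real)) set"

definition opval :: "'a::real_normed_vector mop \<Rightarrow> 'a \<Rightarrow> ('a \<Rightarrow>\<^sub>L real) set" where
  "opval T x = {v. (x, v) \<in> T}"

definition opdom :: "'a::real_normed_vector mop \<Rightarrow> 'a set" where
  "opdom T = {x. opval T x \<noteq> {}}"

definition opzeros :: "'a::real_normed_vector mop \<Rightarrow> 'a set" where
  "opzeros T = {x. 0 \<in> opval T x}"

definition cone_of :: "('a::real_normed_vector \<Rightarrow>\<^sub>L real) set \<Rightarrow> ('a \<Rightarrow>\<^sub>L real) set" where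
  "cone_of A = {t *\<^sub>R v | t v. t \<ge> 0 \<and> v \<in> A}"

definition ocone_of :: "('a::real_normed_vector \<Rightarrow>\<^sub>L real) set \<Rightarrow> ('a \<Rightarrow>\<^sub>L real) set" where
  "ocone_of A = {t *\<^sub>R v | t v. t > 0 \<and> v \<in> A}"

definition normal_cone :: "'a::real_normed_vector set \<Rightarrow> 'a \<Rightarrow> ('a \<Rightarrow>\<^sub>L real) set" where
  "normal_cone C x = {v. \<forall>y\<in>C. blinfun_apply v (y - x) \<le> 0}"

definition sim_p :: "('a::real_normed_vector \<times> ('a \<Rightarrow>\<^sub>L real)) \<Rightarrow> ('a \<times> ('a \<Rightarrow>\<^sub>L real)) \<Rightarrow> bool" where
  "sim_p p q = (case p of (x, xs) \<Rightarrow> case q of (y, ys) \<Rightarrow>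
      min (blinfun_apply ys (x - y)) (blinfun_apply xs (y - x)) < 0
      \<or> (blinfun_apply ys (x - y) = 0 \<and> blinfun_apply xs (y - x) = 0))"

definition ps_polar :: "'a::real_normed_vector mop \<Rightarrow> 'a mop" where
  "ps_polar T = {p. \<forall>q\<in>T. sim_p p q}"

definition ps_polar_D :: "'a::real_normed_vector mop \<Rightarrow> 'a mop" where
  "ps_polar_D T = {(x, v). (x, v) \<in> ps_polar T \<and> x \<in> opdom T}"

definition pseudomonotone :: "'a::real_normed_vector mop \<Rightarrow> bool" where
  "pseudomonotone T \<longleftrightarrow> (\<forall>(x, xs)\<in>T. \<forall>(y, ys)\<in>T.
      blinfun_apply xs (y - x) \<ge> 0 \<longrightarrow> blinfun_apply ys (y - x) \<ge> 0)"

definition op_equivalent :: "'a::real_normed_vector mop \<Rightarrow> 'a mop \<Rightarrow> bool" where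
  "op_equivalent T S \<longleftrightarrow> opdom T = opdom S \<and> opzeros T = opzeros S \<and>
      (\<forall>x \<in> opdom T - opzeros T. cone_of (opval T x) = cone_of (opval S x))"

definition D_maximal_pseudomonotone :: "'a::real_normed_vector mop \<Rightarrow> bool" where
  "D_maximal_pseudomonotone T \<longleftrightarrow> pseudomonotone T \<and>
      (\<exists>S. pseudomonotone S \<and> op_equivalent T S \<and>
         \<not> (\<exists>S'. pseudomonotone S' \<and> S \<subset> S' \<and> opdom S' = opdom S))"

definition Lset :: "'a::real_normed_vector mop \<Rightarrow> 'a \<Rightarrow> 'a set" where
  "Lset T x = {y. \<exists>ys \<in> opval T y. blinfun_apply ys (x - y) \<ge> 0}"

definition hat :: "'a::real_normed_vector mop \<Rightarrow> 'a mop" where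
  "hat T = {(x, v). (x \<in> opzeros T \<and> v \<in> normal_cone (Lset T x) x)
      \<or> (x \<in> opdom T - opzeros T \<and> v \<in> ocone_of (opval T x))}"

end

theory Submission
  imports Defs
begin

text \<open>A pseudomonotone operator S has no proper pseudomonotone extension with the same domain
exactly when \<open>ps_polar_D S = S\<close>, because adding a pair p to S preserves pseudomonotonicity iff
p is \<open>sim_p\<close>-related to every pair of S. The operator \<open>hat T\<close> depends only on the
equivalence class of T, contains every pseudomonotone member S of that class and is contained in
\<open>ps_polar_D S\<close>. So for a domain-maximal member S we get
\<open>S \<subseteq> hat T \<subseteq> ps_polar_D S = S\<close>; conversely, if \<open>hat T = ps_polar_D (hat T)\<close>, then
\<open>hat T\<close> is itself such a member.\<close>

lemma in_opdom_iff: "x \<in> opdom T \<longleftrightarrow> (\<exists>v. (x, v) \<in> T)"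
  by (simp add: opdom_def opval_def)

lemma sim_p_sym: "sim_p p q = sim_p q p"
  by (cases p; cases q) (auto simp: sim_p_def min_def)

lemma sim_p_refl: "sim_p p p"
  by (cases p) (auto simp: sim_p_def)

lemma sim_p_iff: "sim_p (x, xs) (y, ys) \<longleftrightarrow>
   (blinfun_apply xs (y - x) \<ge> 0 \<longrightarrow> blinfun_apply ys (y - x) \<ge> 0) \<and>
   (blinfun_apply ys (x - y) \<ge> 0 \<longrightarrow> blinfun_apply xs (x - y) \<ge> 0)"
  by (simp add: sim_p_def blinfun.diff_right min_def) linarith

lemma sim_p_scaleR:
  assumes "t > 0"
  shows "sim_p (x, t *\<^sub>R u) q = sim_p (x, u) q"
proof (cases q)
  case (Pair y w)
  have "(min a (t * b) < 0) = (min a b < 0)" for a b :: real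
    using assms by (simp add: min_less_iff_disj mult_less_0_iff)
  then show ?thesis
    using assms by (simp add: Pair sim_p_def scaleR_blinfun.rep_eq)
qed

lemma pseudomonotone_iff_sim_p: "pseudomonotone T \<longleftrightarrow> (\<forall>p\<in>T. \<forall>q\<in>T. sim_p p q)"
  unfolding pseudomonotone_def by (fastforce simp: sim_p_iff)

lemma pseudomonotone_insert:
  assumes "pseudomonotone S" and "\<forall>q\<in>S. sim_p p q"
  shows "pseudomonotone (insert p S)"
  using assms by (auto simp: pseudomonotone_iff_sim_p sim_p_refl) (metis sim_p_sym)

lemma pseudomonotone_subset_ps_polar_D:
  "pseudomonotone S \<Longrightarrow> S \<subseteq> ps_polar_D S"
  by (auto simp: ps_polar_D_def ps_polar_def pseudomonotone_iff_sim_p in_opdom_iff)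

lemma pseudomonotone_if_subset_ps_polar: "S \<subseteq> ps_polar S \<Longrightarrow> pseudomonotone S"
  by (auto simp: pseudomonotone_iff_sim_p ps_polar_def)

lemma no_extension_same_domain_iff_ps_polar_D:
  assumes pm: "pseudomonotone S"
  shows "\<not> (\<exists>S'. pseudomonotone S' \<and> S \<subset> S' \<and> opdom S' = opdom S) \<longleftrightarrow> ps_polar_D S = S"
proof
  assume maximal: "\<not> (\<exists>S'. pseudomonotone S' \<and> S \<subset> S' \<and> opdom S' = opdom S)"
  have "p \<in> S" if p: "p \<in> ps_polar_D S" for p
  proof -
    obtain x v where xv: "p = (x, v)" by (cases p)
    have "\<forall>q\<in>S. sim_p p q" and "x \<in> opdom S"
      using p xv by (auto simp: ps_polar_D_def ps_polar_def)
    then have "pseudomonotone (insert p S)" and "opdom (insert p S) = opdom S"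
      using pseudomonotone_insert[OF pm] xv by (auto simp: in_opdom_iff)
    then show "p \<in> S" using maximal by blast
  qed
  then show "ps_polar_D S = S"
    using pseudomonotone_subset_ps_polar_D[OF pm] by blast
next
  assume fixed: "ps_polar_D S = S"
  have "S' \<subseteq> S" if "pseudomonotone S'" "S \<subseteq> S'" "opdom S' = opdom S" for S'
  proof
    fix p assume "p \<in> S'"
    with that have "p \<in> ps_polar_D S"
      by (cases p) (auto simp: ps_polar_D_def ps_polar_def pseudomonotone_iff_sim_p in_opdom_iff)
    then show "p \<in> S" using fixed by simp
  qed
  then show "\<not> (\<exists>S'. pseudomonotone S' \<and> S \<subset> S' \<and> opdom S' = opdom S)" by blast
qed

lemma opval_hat_zero: "x \<in> opzeros T \<Longrightarrow> opval (hat T) x = normal_cone (Lset T x) x"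
  by (auto simp: opval_def hat_def opzeros_def)

lemma opval_hat_nonzero: "x \<in> opdom T - opzeros T \<Longrightarrow> opval (hat T) x = ocone_of (opval T x)"
  by (auto simp: opval_def hat_def opzeros_def)

lemma opval_hat_outside: "x \<notin> opdom T \<Longrightarrow> opval (hat T) x = {}"
  by (auto simp: opval_def hat_def opzeros_def opdom_def)

lemma zero_in_normal_cone: "0 \<in> normal_cone C x"
  by (simp add: normal_cone_def)

lemma cone_of_ocone_of: "cone_of (ocone_of A) = cone_of A"
  unfolding cone_of_def ocone_of_def
  by auto (metis mult_nonneg_nonneg less_imp_le, metis scaleR_one zero_less_one)

lemma ocone_of_eq_cone_of_minus_zero: "0 \<notin> A \<Longrightarrow> ocone_of A = cone_of A - {0}"
  unfolding cone_of_def ocone_of_def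
  by auto (metis less_eq_real_def scaleR_eq_0_iff)+

lemma opdom_hat: "opdom (hat T) = opdom T"
proof -
  have "opval (hat T) x \<noteq> {} \<longleftrightarrow> opval T x \<noteq> {}" for x
  proof (cases "x \<in> opzeros T")
    case True
    then show ?thesis
      using opval_hat_zero zero_in_normal_cone by (fastforce simp: opzeros_def)
  next
    case False
    then show ?thesis
      using opval_hat_nonzero[of x T] opval_hat_outside[of x T]
      by (cases "x \<in> opdom T") (auto simp: opdom_def ocone_of_def intro!: exI[of _ 1])
  qed
  then show ?thesis by (simp add: opdom_def)
qed

lemma opzeros_hat: "opzeros (hat T) = opzeros T"
proof -
  have "0 \<in> opval (hat T) x \<longleftrightarrow> 0 \<in> opval T x" for x
  proof (cases "x \<in> opzeros T")
    case True
    then have "0 \<in> opval T x" by (simp add: opzeros_def)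
    then show ?thesis using opval_hat_zero[OF True] zero_in_normal_cone by simp
  next
    case False
    then show ?thesis
      using opval_hat_nonzero[of x T] opval_hat_outside[of x T]
      by (cases "x \<in> opdom T") (auto simp: opzeros_def ocone_of_def)
  qed
  then show ?thesis by (simp add: opzeros_def)
qed

lemma op_equivalent_hat: "op_equivalent T (hat T)"
  unfolding op_equivalent_def
  using opdom_hat opzeros_hat opval_hat_nonzero cone_of_ocone_of by metis

lemma op_equivalent_sym: "op_equivalent T S \<Longrightarrow> op_equivalent S T"
  unfolding op_equivalent_def by auto

lemma Lset_subset_if_op_equivalent:
  assumes equiv: "op_equivalent T S"
  shows "Lset T x \<subseteq> Lset S x"
proof
  fix y assume "y \<in> Lset T x"
  then obtain ys where ys: "ys \<in> opval T y" "blinfun_apply ys (x - y) \<ge> 0"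
    by (auto simp: Lset_def)
  show "y \<in> Lset S x"
  proof (cases "y \<in> opzeros T")
    case True
    then have "0 \<in> opval S y" using equiv by (auto simp: op_equivalent_def opzeros_def)
    then show ?thesis by (auto simp: Lset_def intro!: bexI[of _ 0])
  next
    case False
    then have "y \<in> opdom T - opzeros T" using ys by (auto simp: opdom_def)
    moreover have "ys \<in> cone_of (opval T y)"
      using ys(1) unfolding cone_of_def by (auto intro!: exI[of _ 1])
    ultimately have "ys \<in> cone_of (opval S y)" using equiv unfolding op_equivalent_def by blast
    then obtain t v where tv: "ys = t *\<^sub>R v" "t \<ge> 0" "v \<in> opval S y"
      by (auto simp: cone_of_def)
    have "t > 0" using tv False ys(1) by (cases "t = 0") (auto simp: opzeros_def)
    then have "blinfun_apply v (x - y) \<ge> 0"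
      using ys(2) tv(1) by (simp add: zero_le_mult_iff scaleR_blinfun.rep_eq)
    then show ?thesis using tv by (auto simp: Lset_def)
  qed
qed

lemma hat_cong:
  assumes equiv: "op_equivalent T S"
  shows "hat T = hat S"
proof -
  have L: "Lset T x = Lset S x" for x
    using Lset_subset_if_op_equivalent[OF equiv]
      Lset_subset_if_op_equivalent[OF op_equivalent_sym[OF equiv]] by blast
  have dz: "opdom T = opdom S" "opzeros T = opzeros S"
    using equiv by (auto simp: op_equivalent_def)
  have "ocone_of (opval T x) = ocone_of (opval S x)" if "x \<in> opdom T - opzeros T" for x
  proof -
    have "0 \<notin> opval T x" "0 \<notin> opval S x" using that dz by (auto simp: opzeros_def)
    then show ?thesis
      using equiv that by (simp add: ocone_of_eq_cone_of_minus_zero op_equivalent_def)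
  qed
  then show ?thesis unfolding hat_def using L dz by auto
qed

lemma pseudomonotone_subset_hat:
  assumes pm: "pseudomonotone S"
  shows "S \<subseteq> hat S"
proof
  fix p assume p: "p \<in> S"
  obtain x v where xv: "p = (x, v)" by (cases p)
  show "p \<in> hat S"
  proof (cases "x \<in> opzeros S")
    case True
    have "blinfun_apply v (y - x) \<le> 0" if y: "y \<in> Lset S x" for y
    proof -
      obtain ys where "(y, ys) \<in> S" "blinfun_apply ys (x - y) \<ge> 0"
        using y by (auto simp: Lset_def opval_def)
      then have "blinfun_apply v (x - y) \<ge> 0"
        using pm p xv unfolding pseudomonotone_def by fastforce
      then show ?thesis by (metis blinfun.minus_right minus_diff_eq neg_0_le_iff_le)
    qed
    then show ?thesis using True xv by (auto simp: hat_def normal_cone_def)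
  next
    case False
    have "v \<in> ocone_of (opval S x)"
      using p xv unfolding ocone_of_def opval_def by (auto intro!: exI[of _ 1])
    then show ?thesis using False p xv by (auto simp: hat_def in_opdom_iff)
  qed
qed

text \<open>At a zero x of S the pair \<open>(x, 0) \<in> S\<close> forces \<open>\<langle>x - y, w\<rangle> \<le> 0\<close> for all \<open>(y, w) \<in> S\<close>,
and equality puts y into \<open>L(S, x)\<close>, where the normal cone takes over.\<close>
lemma sim_p_hat:
  assumes pm: "pseudomonotone S" and p: "p \<in> hat S" and q: "q \<in> S"
  shows "sim_p p q"
proof -
  obtain x v where xv: "p = (x, v)" by (cases p)
  obtain y w where yw: "q = (y, w)" by (cases q)
  show ?thesis
  proof (cases "x \<in> opzeros S")
    case True
    have "v \<in> normal_cone (Lset S x) x"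
      using p xv opval_hat_zero[OF True] by (auto simp: opval_def)
    then have normal: "blinfun_apply w (x - y) \<ge> 0 \<Longrightarrow> blinfun_apply v (y - x) \<le> 0"
      using q yw by (auto simp: normal_cone_def Lset_def opval_def)
    have "(x, 0) \<in> S" using True by (auto simp: opzeros_def opval_def)
    then have "blinfun_apply w (y - x) \<ge> 0"
      using pm q yw unfolding pseudomonotone_def by fastforce
    then have "blinfun_apply w (x - y) \<le> 0"
      by (metis blinfun.minus_right minus_diff_eq neg_0_le_iff_le)
    then show ?thesis using normal unfolding xv yw sim_p_def by (auto simp: min_def)
  next
    case False
    then have "x \<in> opdom S - opzeros S"
      using p xv opdom_hat[of S] by (auto simp: in_opdom_iff)
    then have "v \<in> ocone_of (opval S x)"
      using p xv opval_hat_nonzero[of x S] by (auto simp: opval_def)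
    then obtain t u where tu: "v = t *\<^sub>R u" "t > 0" "(x, u) \<in> S"
      by (auto simp: opval_def ocone_of_def)
    have "sim_p (x, u) q" using pm tu(3) q by (auto simp: pseudomonotone_iff_sim_p)
    then show ?thesis unfolding xv tu(1) sim_p_scaleR[OF tu(2)] .
  qed
qed

lemma hat_subset_ps_polar_D:
  assumes "pseudomonotone S"
  shows "hat S \<subseteq> ps_polar_D S"
proof
  fix p assume p: "p \<in> hat S"
  then have "fst p \<in> opdom S" using opdom_hat[of S] by (cases p) (auto simp: in_opdom_iff)
  then show "p \<in> ps_polar_D S"
    using sim_p_hat[OF assms p] by (cases p) (auto simp: ps_polar_D_def ps_polar_def)
qed

theorem mainTheorem13:
  fixes T :: "('a::banach \<times> ('a \<Rightarrow>\<^sub>L real)) set"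
  assumes "pseudomonotone T"
  shows "D_maximal_pseudomonotone T \<longleftrightarrow> hat T = ps_polar_D (hat T)"
proof
  assume "D_maximal_pseudomonotone T"
  then obtain S where pm: "pseudomonotone S" and equiv: "op_equivalent T S"
    and maximal: "\<not> (\<exists>S'. pseudomonotone S' \<and> S \<subset> S' \<and> opdom S' = opdom S)"
    by (auto simp: D_maximal_pseudomonotone_def)
  have fixed: "ps_polar_D S = S"
    using maximal no_extension_same_domain_iff_ps_polar_D[OF pm] by blast
  have "hat T = S"
    using hat_cong[OF equiv] pseudomonotone_subset_hat[OF pm] hat_subset_ps_polar_D[OF pm] fixed
    by blast
  then show "hat T = ps_polar_D (hat T)" using fixed by simp
next
  assume fixed: "hat T = ps_polar_D (hat T)"
  then have pm: "pseudomonotone (hat T)"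
    by (intro pseudomonotone_if_subset_ps_polar) (auto simp: ps_polar_D_def)
  then have "\<not> (\<exists>S'. pseudomonotone S' \<and> hat T \<subset> S' \<and> opdom S' = opdom (hat T))"
    using fixed no_extension_same_domain_iff_ps_polar_D by metis
  then show "D_maximal_pseudomonotone T"
    using assms pm op_equivalent_hat[of T] by (auto simp: D_maximal_pseudomonotone_def)
qed

end
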